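(* For $n\ge3$ and every integer $\ell$ with $0<\ell\le d-1$, one has $N(\ell)=0$.
   Context: Sylvester numbers: $s_0=2$, $s_{k+1}=1+\prod_{i=0}^ks_i$. Fix $n$, $d=\prod_{i=0}^ns_i$, $a_i=d/s_i$ for $0\le i\le n$, $a_{n+1}=1$. For $\ell\in\{0,\dots,d-1\}$ let $\tilde\theta_i(\ell)=\{\ell/s_i\}$ (fractional part) for $0\le i\le n$ and $\tilde\theta_{n+1}(\ell)=\ell/d$; $T_0(\ell)=\{i\in\{0,\dots,n+1\}:\tilde\theta_i(\ell)=0\}$, $T_1(\ell)=\{0,\dots,n+1\}\setminus T_0(\ell)$; $A(\ell)=\sum_{i\in T_1(\ell)}(\frac d2-a_i)$, $B(\ell)=\sum_{i\in T_1(\ell)}(d\tilde\theta_i(\ell)-\frac d2)$. $N(\ell)$ is the number of integer tuples $(k_i)_{i\in T_0(\ell)}$ with $0\le k_i\le s_i-2$ for $0\le i\le n$ and $0\le k_{n+1}\le d-2$ (if $n+1\in T_0(\ell)$), such that $A(\ell)+\sum_{i\in T_0(\ell)}k_ia_i=d$ and $B(\ell)=0$ (so $N(\ell)=0$ if $B(\ell)\ne0$). *)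

theory Defs
  imports Complex_Main
begin

fun sylv :: "nat \<Rightarrow> nat" where
  "sylv 0 = 2"
| "sylv (Suc k) = 1 + (\<Prod>i\<le>k. sylv i)"

definition sd :: "nat \<Rightarrow> nat" where
  "sd n = (\<Prod>i\<le>n. sylv i)"

definition sa :: "nat \<Rightarrow> nat \<Rightarrow> nat" where
  "sa n i = (if i \<le> n then sd n div sylv i else 1)"

definition stheta :: "nat \<Rightarrow> nat \<Rightarrow> nat \<Rightarrow> real" where
  "stheta n l i = (if i \<le> n then frac (real l / real (sylv i)) else real l / real (sd n))"

definition sT0 :: "nat \<Rightarrow> nat \<Rightarrow> nat set" where
  "sT0 n l = {i \<in> {0..n+1}. stheta n l i = 0}"

definition sT1 :: "nat \<Rightarrow> nat \<Rightarrow> nat set" where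
  "sT1 n l = {0..n+1} - sT0 n l"

definition sA :: "nat \<Rightarrow> nat \<Rightarrow> real" where
  "sA n l = (\<Sum>i\<in>sT1 n l. real (sd n) / 2 - real (sa n i))"

definition sB :: "nat \<Rightarrow> nat \<Rightarrow> real" where
  "sB n l = (\<Sum>i\<in>sT1 n l. real (sd n) * stheta n l i - real (sd n) / 2)"

definition sbound :: "nat \<Rightarrow> nat \<Rightarrow> nat" where
  "sbound n i = (if i \<le> n then sylv i - 2 else sd n - 2)"

text \<open>N(l): number of tuples (k_i)_(i in T0(l)), represented as functions
  nat \<Rightarrow> nat that vanish outside T0(l).\<close>
definition sN :: "nat \<Rightarrow> nat \<Rightarrow> nat" where
  "sN n l = card {k :: nat \<Rightarrow> nat.
      (\<forall>i. i \<notin> sT0 n l \<longrightarrow> k i = 0) \<and>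
      (\<forall>i\<in>sT0 n l. k i \<le> sbound n i) \<and>
      sA n l + (\<Sum>i\<in>sT0 n l. real (k i) * real (sa n i)) = real (sd n) \<and>
      sB n l = 0}"

end

theory Submission
  imports Defs
begin

text \<open>
  If \<open>T\<^sub>0(\<ell>)\<close> is empty, then \<open>A(\<ell>) = n d / 2\<close> because \<open>\<Sum>\<^sub>i a\<^sub>i = d\<close>,
  so \<open>A(\<ell>) = d\<close> forces \<open>n = 2\<close>. Otherwise pick \<open>j \<in> T\<^sub>0(\<ell>)\<close>, i.e. \<open>s\<^sub>j\<close> divides \<open>\<ell>\<close>.
  Since \<open>d \<theta>\<^sub>i(\<ell>)\<close> is an integer, the equations \<open>A + \<Sum> k\<^sub>i a\<^sub>i = d\<close> and \<open>B = 0\<close>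
  combine, again via \<open>\<Sum>\<^sub>i a\<^sub>i = d\<close>, into the identity of naturals
  \<open>\<Sum>\<^sub>i\<^sub>\<in>\<^sub>T\<^sub>1 d \<theta>\<^sub>i + \<Sum>\<^sub>i\<^sub>\<in>\<^sub>T\<^sub>0 (k\<^sub>i + 1) a\<^sub>i = 2 d\<close>.
  Modulo \<open>s\<^sub>j\<close> every term except \<open>(k\<^sub>j + 1) a\<^sub>j\<close> vanishes, as \<open>s\<^sub>j\<close> divides \<open>d\<close>, \<open>\<ell>\<close>
  and \<open>a\<^sub>i\<close> for \<open>i \<noteq> j\<close>; and \<open>a\<^sub>j \<equiv> -1 (mod s\<^sub>j)\<close>, once more by \<open>\<Sum>\<^sub>i a\<^sub>i = d\<close>.
  Hence \<open>s\<^sub>j\<close> divides \<open>k\<^sub>j + 1 < s\<^sub>j\<close>, which is absurd.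
\<close>

lemma two_le_sylv: "2 \<le> sylv i"
proof (induction i rule: less_induct)
  case (less i)
  show ?case
  proof (cases i)
    case (Suc k)
    with less have "0 < (\<Prod>m\<le>k. sylv m)"
      by (intro prod_pos) (auto intro: order.strict_trans2[of 0 2])
    with Suc show ?thesis by (simp add: Suc_le_eq)
  qed simp
qed

lemma sylv_pos: "0 < sylv i"
  using two_le_sylv[of i] by simp

lemma sd_pos: "0 < sd n"
  unfolding sd_def by (intro prod_pos) (simp add: sylv_pos)

lemma sd_Suc: "sd (Suc n) = sd n * sylv (Suc n)"
  by (simp add: sd_def)

lemma sylv_Suc_eq: "sylv (Suc n) = sd n + 1"
  by (simp add: sd_def)

lemma sylv_dvd_sd: "i \<le> n \<Longrightarrow> sylv i dvd sd n"
  unfolding sd_def by (intro dvd_prodI) auto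

lemma sa_mult_sylv: "i \<le> n \<Longrightarrow> sa n i * sylv i = sd n"
  by (simp add: sa_def sylv_dvd_sd)

lemma sa_eq_prod: "i \<le> n \<Longrightarrow> sa n i = (\<Prod>m\<in>{..n} - {i}. sylv m)"
  using sa_mult_sylv[of i n] sylv_pos[of i]
  by (simp add: sd_def prod.remove[of "{..n}" i])

lemma sylv_dvd_sa: "i \<le> n \<Longrightarrow> j \<le> n \<Longrightarrow> i \<noteq> j \<Longrightarrow> sylv j dvd sa n i"
  by (simp add: sa_eq_prod dvd_prodI)

lemma sa_Suc: "i \<le> n \<Longrightarrow> sa (Suc n) i = sa n i * sylv (Suc n)"
  unfolding sa_def sd_Suc using sylv_dvd_sd[of i n] by (simp add: dvd_div_mult)

lemma sum_sa: "(\<Sum>i\<le>n. sa n i) + 1 = sd n"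
proof (induction n)
  case 0
  then show ?case by (simp add: sa_def sd_def)
next
  case (Suc n)
  have "(\<Sum>i\<le>n. sa (Suc n) i) = (\<Sum>i\<le>n. sa n i) * sylv (Suc n)"
    unfolding sum_distrib_right by (intro sum.cong) (simp_all add: sa_Suc)
  moreover have "sa (Suc n) (Suc n) = sd n"
    using sylv_pos[of "Suc n"] by (simp add: sa_def sd_Suc del: sylv.simps)
  ultimately have "(\<Sum>i\<le>Suc n. sa (Suc n) i) + 1 = (\<Sum>i\<le>n. sa n i) * sylv (Suc n) + (sd n + 1)"
    by simp
  also have "\<dots> = ((\<Sum>i\<le>n. sa n i) + 1) * sylv (Suc n)"
    unfolding sylv_Suc_eq[symmetric] by (simp add: algebra_simps del: sylv.simps)
  also have "\<dots> = sd (Suc n)"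
    by (simp only: Suc.IH sd_Suc)
  finally show ?case .
qed

lemma sylv_dvd_Suc_sa: "j \<le> n \<Longrightarrow> sylv j dvd sa n j + 1"
proof -
  assume j: "j \<le> n"
  have "sd n = (sa n j + 1) + (\<Sum>i\<in>{..n} - {j}. sa n i)"
    using j by (simp add: sum_sa[symmetric] sum.remove[of "{..n}" j])
  moreover have "sylv j dvd (\<Sum>i\<in>{..n} - {j}. sa n i)"
    using j by (intro dvd_sum) (auto intro: sylv_dvd_sa)
  ultimately show ?thesis
    using sylv_dvd_sd[OF j] by (metis dvd_add_left_iff)
qed

lemma coprime_sylv_sa: "j \<le> n \<Longrightarrow> coprime (sylv j) (sa n j)"
  using sylv_dvd_Suc_sa coprime_add_one_left coprime_divisors dvd_refl by blast

lemma sum_sa_atLeast0AtMost: "(\<Sum>i\<in>{0..n+1}. sa n i) = sd n"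
  using sum_sa[of n] by (simp add: atLeast0AtMost sa_def)

lemma frac_of_nat_divide: "0 < s \<Longrightarrow> frac (real l / real s) = real (l mod s) / real s"
proof -
  assume s: "0 < s"
  have "real l = real (l div s) * real s + real (l mod s)"
    by (metis of_nat_add of_nat_mult div_mult_mod_eq)
  then have "real l / real s - real (l mod s) / real s = real (l div s)"
    using s by (simp add: field_simps)
  then show ?thesis
    using s by (simp add: frac_unique_iff)
qed

definition sdtheta :: "nat \<Rightarrow> nat \<Rightarrow> nat \<Rightarrow> nat" where
  "sdtheta n l i = (if i \<le> n then sa n i * (l mod sylv i) else l)"

lemma sd_mult_stheta: "real (sd n) * stheta n l i = real (sdtheta n l i)"
proof (cases "i \<le> n")
  case True
  then have "real (sd n) = real (sa n i) * real (sylv i)"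
    by (simp flip: sa_mult_sylv)
  with True show ?thesis
    using sylv_pos[of i] by (simp add: stheta_def sdtheta_def frac_of_nat_divide)
next
  case False
  then show ?thesis
    using sd_pos[of n] by (simp add: stheta_def sdtheta_def)
qed

lemma sT0_eq: "0 < l \<Longrightarrow> sT0 n l = {i. i \<le> n \<and> sylv i dvd l}"
  using sd_pos[of n] sylv_pos
  by (auto simp: sT0_def stheta_def frac_of_nat_divide dvd_eq_mod_eq_0 le_Suc_eq
      sylv_pos[THEN less_not_refl2])

lemma sylv_dvd_sdtheta:
  assumes "j \<le> n" "sylv j dvd l"
  shows "sylv j dvd sdtheta n l i"
  using assms sylv_dvd_sa[of i n j] by (cases "i = j") (auto simp: sdtheta_def)

definition sN_tuple :: "nat \<Rightarrow> nat \<Rightarrow> (nat \<Rightarrow> nat) \<Rightarrow> bool" where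
  "sN_tuple n l k \<longleftrightarrow>
     (\<forall>i. i \<notin> sT0 n l \<longrightarrow> k i = 0) \<and>
     (\<forall>i\<in>sT0 n l. k i \<le> sbound n i) \<and>
     sA n l + (\<Sum>i\<in>sT0 n l. real (k i) * real (sa n i)) = real (sd n) \<and>
     sB n l = 0"

lemma sN_eq_card: "sN n l = card (Collect (sN_tuple n l))"
  unfolding sN_def sN_tuple_def[abs_def] ..

lemma sA_sT0_empty: "sT0 n l = {} \<Longrightarrow> sA n l = real n * real (sd n) / 2"
  using sum_sa_atLeast0AtMost[of n, THEN arg_cong[where f = real]]
  by (simp add: sA_def sT1_def sum_subtractf of_nat_sum[symmetric] algebra_simps del: of_nat_sum)

lemma sN_tuple_sT0_nonempty:
  assumes "3 \<le> n" "sN_tuple n l k"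
  shows "sT0 n l \<noteq> {}"
proof
  assume "sT0 n l = {}"
  then have "real n * real (sd n) / 2 = real (sd n)"
    using assms(2) by (simp add: sN_tuple_def sA_sT0_empty)
  then show False
    using assms(1) sd_pos[of n] by simp
qed

lemma sN_tuple_integer_eq:
  assumes "sN_tuple n l k"
  shows "(\<Sum>i\<in>sT1 n l. sdtheta n l i) + (\<Sum>i\<in>sT0 n l. (k i + 1) * sa n i) = 2 * sd n"
proof -
  let ?T0 = "sT0 n l" and ?T1 = "sT1 n l"
  have "sA n l + sB n l = (\<Sum>i\<in>?T1. real (sdtheta n l i) - real (sa n i))"
    unfolding sA_def sB_def sum.distrib[symmetric] sd_mult_stheta[symmetric]
    by (simp add: algebra_simps)
  then have "(\<Sum>i\<in>?T1. real (sdtheta n l i)) + (\<Sum>i\<in>?T0. real (k i) * real (sa n i))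
      = real (sd n) + (\<Sum>i\<in>?T1. real (sa n i))"
    using assms by (simp add: sN_tuple_def sum_subtractf)
  moreover have "(\<Sum>i\<in>?T1. real (sa n i)) + (\<Sum>i\<in>?T0. real (sa n i)) = real (sd n)"
  proof -
    have "?T1 \<union> ?T0 = {0..n+1}" "?T1 \<inter> ?T0 = {}" "finite ?T1" "finite ?T0"
      by (auto simp: sT1_def sT0_def)
    then have "(\<Sum>i\<in>?T1. real (sa n i)) + (\<Sum>i\<in>?T0. real (sa n i))
        = (\<Sum>i\<in>{0..n+1}. real (sa n i))"
      by (simp flip: sum.union_disjoint)
    then show ?thesis
      by (simp only: of_nat_sum[symmetric] sum_sa_atLeast0AtMost)
  qed
  moreover have "(\<Sum>i\<in>?T0. real ((k i + 1) * sa n i))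
      = (\<Sum>i\<in>?T0. real (k i) * real (sa n i)) + (\<Sum>i\<in>?T0. real (sa n i))"
    by (simp add: sum.distrib[symmetric] algebra_simps)
  ultimately have "real ((\<Sum>i\<in>?T1. sdtheta n l i) + (\<Sum>i\<in>?T0. (k i + 1) * sa n i))
      = real (2 * sd n)"
    unfolding of_nat_add of_nat_sum of_nat_mult by simp
  then show ?thesis
    by (simp only: of_nat_eq_iff)
qed

lemma sN_tuple_sylv_dvd:
  assumes k: "sN_tuple n l k" and l: "0 < l" and j: "j \<in> sT0 n l"
  shows "sylv j dvd k j + 1"
proof -
  have jn: "j \<le> n" and jl: "sylv j dvd l"
    using j l by (simp_all add: sT0_eq)
  have T0: "finite (sT0 n l)"
    using l by (simp add: sT0_eq)
  let ?X = "\<Sum>i\<in>sT1 n l. sdtheta n l i"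
  let ?R = "\<Sum>i\<in>sT0 n l - {j}. (k i + 1) * sa n i"
  have "?X + ((k j + 1) * sa n j + ?R) = 2 * sd n"
    using sN_tuple_integer_eq[OF k] unfolding sum.remove[OF T0 j] .
  moreover have "sylv j dvd 2 * sd n"
    using jn by (simp add: sylv_dvd_sd)
  ultimately have "sylv j dvd ?X + ((k j + 1) * sa n j + ?R)"
    by simp
  moreover have "sylv j dvd ?X"
    using jn jl by (intro dvd_sum sylv_dvd_sdtheta)
  moreover have "sylv j dvd ?R"
    using jn l by (intro dvd_sum dvd_mult sylv_dvd_sa) (auto simp: sT0_eq)
  ultimately have "sylv j dvd (k j + 1) * sa n j"
    by (simp only: dvd_add_right_iff dvd_add_left_iff)
  then show ?thesis
    using coprime_sylv_sa[OF jn] by (simp only: coprime_dvd_mult_left_iff)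
qed

theorem lemma6p8:
  fixes n l :: nat
  assumes "n \<ge> 3" and "0 < l" and "l \<le> sd n - 1"
  shows "sN n l = 0"
proof -
  have "\<not> sN_tuple n l k" for k
  proof
    assume k: "sN_tuple n l k"
    then obtain j where j: "j \<in> sT0 n l"
      using sN_tuple_sT0_nonempty[OF assms(1)] by blast
    then have "j \<le> n"
      using assms(2) by (simp add: sT0_eq)
    have "sylv j dvd k j + 1"
      using sN_tuple_sylv_dvd[OF k assms(2) j] .
    moreover have "k j + 1 < sylv j"
      using k j \<open>j \<le> n\<close> two_le_sylv[of j] by (auto simp: sN_tuple_def sbound_def)
    ultimately show False
      by (simp add: nat_dvd_not_less)
  qed
  then have "Collect (sN_tuple n l) = {}"
    by blast
  then show ?thesis
    by (simp only: sN_eq_card card.empty)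
qed

end
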